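(* For any integers $r\ge 2$ and $t\ge 3$, $dim_s(P_r\times K_t)=t\left\lceil \frac{r}{2}\right\rceil$.
   Context: $P_r$ is the path on $r$ vertices and $K_t$ the complete graph on $t$ vertices. The direct product $G\times H$ has vertex set $V(G)\times V(H)$, with $(a,b)$ adjacent to $(c,d)$ iff $ac\in E(G)$ and $bd\in E(H)$. For a connected graph $G$, $I_G[u,v]$ is the set of vertices lying on some shortest $u$–$v$ path; a vertex $w$ strongly resolves $u,v$ if $v\in I_G[u,w]$ or $u\in I_G[v,w]$; a strong resolving set is a set $S\subseteq V(G)$ such that every pair of vertices is strongly resolved by some vertex of $S$; $dim_s(G)$ is the minimum cardinality of a strong resolving set. *)

theory Defs
  imports Complex_Main
begin

text \<open>A graph is given by a vertex set V and a (symmetric) adjacency predicate E.\<close>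

definition is_walk :: "'a set \<Rightarrow> ('a \<Rightarrow> 'a \<Rightarrow> bool) \<Rightarrow> 'a list \<Rightarrow> bool" where
  "is_walk V E xs \<longleftrightarrow> xs \<noteq> [] \<and> set xs \<subseteq> V \<and>
     (\<forall>i. Suc i < length xs \<longrightarrow> E (xs ! i) (xs ! Suc i))"

definition gdist :: "'a set \<Rightarrow> ('a \<Rightarrow> 'a \<Rightarrow> bool) \<Rightarrow> 'a \<Rightarrow> 'a \<Rightarrow> nat" where
  "gdist V E u v = (LEAST n. \<exists>xs. is_walk V E xs \<and> hd xs = u \<and> last xs = v \<and> length xs = Suc n)"

definition interval :: "'a set \<Rightarrow> ('a \<Rightarrow> 'a \<Rightarrow> bool) \<Rightarrow> 'a \<Rightarrow> 'a \<Rightarrow> 'a set" where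
  "interval V E u v = {w. \<exists>xs. is_walk V E xs \<and> hd xs = u \<and> last xs = v \<and>
      length xs = Suc (gdist V E u v) \<and> w \<in> set xs}"

definition strongly_resolves :: "'a set \<Rightarrow> ('a \<Rightarrow> 'a \<Rightarrow> bool) \<Rightarrow> 'a \<Rightarrow> 'a \<Rightarrow> 'a \<Rightarrow> bool" where
  "strongly_resolves V E w u v \<longleftrightarrow> v \<in> interval V E u w \<or> u \<in> interval V E v w"

definition strong_resolving_set :: "'a set \<Rightarrow> ('a \<Rightarrow> 'a \<Rightarrow> bool) \<Rightarrow> 'a set \<Rightarrow> bool" where
  "strong_resolving_set V E S \<longleftrightarrow> S \<subseteq> V \<and>
     (\<forall>u\<in>V. \<forall>v\<in>V. u \<noteq> v \<longrightarrow> (\<exists>w\<in>S. strongly_resolves V E w u v))"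

definition strong_metric_dim :: "'a set \<Rightarrow> ('a \<Rightarrow> 'a \<Rightarrow> bool) \<Rightarrow> nat" where
  "strong_metric_dim V E = (LEAST k. \<exists>S. strong_resolving_set V E S \<and> finite S \<and> card S = k)"

definition path_vertices :: "nat \<Rightarrow> nat set" where "path_vertices r = {0..<r}"
definition path_adj :: "nat \<Rightarrow> nat \<Rightarrow> nat \<Rightarrow> bool" where
  "path_adj r i j \<longleftrightarrow> i < r \<and> j < r \<and> (j = Suc i \<or> i = Suc j)"

definition complete_vertices :: "nat \<Rightarrow> nat set" where "complete_vertices t = {0..<t}"
definition complete_adj :: "nat \<Rightarrow> nat \<Rightarrow> nat \<Rightarrow> bool" where
  "complete_adj t a b \<longleftrightarrow> a < t \<and> b < t \<and> a \<noteq> b"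

definition direct_prod_vertices :: "'a set \<Rightarrow> 'b set \<Rightarrow> ('a \<times> 'b) set" where
  "direct_prod_vertices VG VH = VG \<times> VH"
definition direct_prod_adj :: "('a \<Rightarrow> 'a \<Rightarrow> bool) \<Rightarrow> ('b \<Rightarrow> 'b \<Rightarrow> bool) \<Rightarrow> 'a \<times> 'b \<Rightarrow> 'a \<times> 'b \<Rightarrow> bool" where
  "direct_prod_adj EG EH x y \<longleftrightarrow> EG (fst x) (fst y) \<and> EH (snd x) (snd y)"

end

theory Submission
  imports Defs
begin

text \<open>
  For \<open>t \<ge> 3\<close> the distance between \<open>(i, a)\<close> and \<open>(j, b)\<close> in \<open>P\<^sub>r \<times> K\<^sub>t\<close> is \<open>|i - j|\<close> unless
  the rows are equal or adjacent. In a connected graph, a vertex \<open>v\<close> that is maximally distant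
  from \<open>u\<close> (no neighbour of \<open>v\<close> is farther from \<open>u\<close>) never lies on a geodesic from \<open>u\<close> to
  another vertex, so a pair of mutually maximally distant vertices is strongly resolved only by
  its own members and every strong resolving set meets it. For each colour \<open>a\<close> the vertices
  \<open>(i, a)\<close>, \<open>(i + 1, a)\<close> of adjacent rows are mutually maximally distant, and so are \<open>(0, a)\<close>,
  \<open>(r - 1, a)\<close> when \<open>r \<ge> 3\<close>; hence a strong resolving set contains at least \<open>\<lceil>r/2\<rceil>\<close> vertices
  of every colour. Conversely, the vertices in even rows form a strong resolving set.
\<close>

abbreviation walk_from_to :: "'a set \<Rightarrow> ('a \<Rightarrow> 'a \<Rightarrow> bool) \<Rightarrow> 'a \<Rightarrow> 'a \<Rightarrow> 'a list \<Rightarrow> bool" where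
  "walk_from_to V E u v xs \<equiv> is_walk V E xs \<and> hd xs = u \<and> last xs = v"

definition walk_connected :: "'a set \<Rightarrow> ('a \<Rightarrow> 'a \<Rightarrow> bool) \<Rightarrow> bool" where
  "walk_connected V E \<longleftrightarrow> (\<forall>u\<in>V. \<forall>v\<in>V. \<exists>xs. walk_from_to V E u v xs)"

lemma is_walk_Cons:
  "is_walk V E (x # ys) \<longleftrightarrow> x \<in> V \<and> (ys = [] \<or> is_walk V E ys \<and> E x (hd ys))"
proof (cases ys)
  case (Cons y zs)
  have "(\<forall>i < length ys. E ((x # ys) ! i) (ys ! i)) \<longleftrightarrow>
        E x y \<and> (\<forall>i. Suc i < length ys \<longrightarrow> E (ys ! i) (ys ! Suc i))"
    using Cons by (simp add: All_less_Suc2)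
  then show ?thesis using Cons by (simp add: is_walk_def conj_ac)
qed (simp add: is_walk_def)

lemma is_walk_rev: "is_walk V E xs \<Longrightarrow> (\<And>x y. E x y \<Longrightarrow> E y x) \<Longrightarrow> is_walk V E (rev xs)"
  unfolding is_walk_def
proof (intro conjI allI impI)
  fix i assume h: "xs \<noteq> [] \<and> set xs \<subseteq> V \<and> (\<forall>i. Suc i < length xs \<longrightarrow> E (xs ! i) (xs ! Suc i))"
    and s: "\<And>x y. E x y \<Longrightarrow> E y x" and i: "Suc i < length (rev xs)"
  have "E (xs ! (length xs - Suc (Suc i))) (xs ! Suc (length xs - Suc (Suc i)))"
    using h i by auto
  moreover have "Suc (length xs - Suc (Suc i)) = length xs - Suc i" using i by simp
  ultimately show "E (rev xs ! i) (rev xs ! Suc i)" using i s by (simp add: rev_nth)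
qed auto

lemma walk_from_to_append:
  assumes xs: "walk_from_to V E u w xs" and ys: "walk_from_to V E w v ys"
  shows "walk_from_to V E u v (xs @ tl ys)" and "length (xs @ tl ys) = length xs + length ys - 1"
proof -
  have "is_walk V E (xs @ tl ys)" using xs ys
  proof (induction xs arbitrary: u)
    case (Cons x xs)
    then show ?case by (cases xs; cases ys) (auto simp: is_walk_Cons)
  qed (simp add: is_walk_def)
  moreover have "xs \<noteq> []" "ys \<noteq> []" using xs ys by (auto simp: is_walk_def)
  moreover have "last (xs @ tl ys) = v"
    using xs ys \<open>ys \<noteq> []\<close> by (cases ys rule: list.exhaust) (auto split: if_splits)
  ultimately show "walk_from_to V E u v (xs @ tl ys)" "length (xs @ tl ys) = length xs + length ys - 1"
    using xs by (simp_all add: Suc_leI)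
qed

lemma walk_from_to_split:
  assumes xs: "walk_from_to V E u v xs" and p: "p < length xs"
  shows "walk_from_to V E u (xs ! p) (take (Suc p) xs)" and "walk_from_to V E (xs ! p) v (drop p xs)"
proof -
  have "is_walk V E (take (Suc p) xs)"
    using xs p set_take_subset[of "Suc p" xs] unfolding is_walk_def by (auto simp: nth_take)
  moreover have "is_walk V E (drop p xs)"
    using xs p set_drop_subset[of p xs] unfolding is_walk_def by (auto simp: nth_drop)
  moreover have "hd (take (Suc p) xs) = u"
    using xs by (simp add: hd_take)
  moreover have "last (take (Suc p) xs) = xs ! p"
    using p by (simp add: take_Suc_conv_app_nth)
  moreover have "hd (drop p xs) = xs ! p" "last (drop p xs) = v"
    using xs p by (simp_all add: hd_drop_conv_nth)
  ultimately show "walk_from_to V E u (xs ! p) (take (Suc p) xs)" "walk_from_to V E (xs ! p) v (drop p xs)"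
    by simp_all
qed

lemma gdist_less_length:
  assumes "walk_from_to V E u v xs"
  shows "gdist V E u v < length xs"
proof -
  have "length xs = Suc (length xs - 1)" using assms by (cases xs) (auto simp: is_walk_def)
  then have "gdist V E u v \<le> length xs - 1"
    unfolding gdist_def using assms by (intro Least_le) metis
  then show ?thesis using assms by (cases xs) (auto simp: is_walk_def)
qed

lemma gdist_shortest_walk:
  assumes "walk_from_to V E u v xs"
  obtains ys where "walk_from_to V E u v ys" and "length ys = Suc (gdist V E u v)"
proof -
  have "\<exists>n ys. is_walk V E ys \<and> hd ys = u \<and> last ys = v \<and> length ys = Suc n"
    using assms by (intro exI[of _ "length xs - 1"] exI[of _ xs]) (auto simp: is_walk_def)
  from LeastI_ex[OF this] show ?thesis
    using that unfolding gdist_def by blast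
qed

lemma gdist_eqI:
  assumes xs: "walk_from_to V E u v xs" "length xs = Suc d"
    and shortest: "\<And>ys. walk_from_to V E u v ys \<Longrightarrow> d < length ys"
  shows "gdist V E u v = d"
proof -
  obtain ys where "walk_from_to V E u v ys" "length ys = Suc (gdist V E u v)"
    using gdist_shortest_walk[OF xs(1)] .
  then have "d \<le> gdist V E u v" using shortest by fastforce
  moreover have "gdist V E u v \<le> d" using gdist_less_length[OF xs(1)] xs(2) by simp
  ultimately show ?thesis by simp
qed

lemma connected_shortest_walk:
  assumes "walk_connected V E" and "u \<in> V" "v \<in> V"
  obtains xs where "walk_from_to V E u v xs" and "length xs = Suc (gdist V E u v)"
proof -
  obtain ys where "walk_from_to V E u v ys" using assms unfolding walk_connected_def by blast
  from gdist_shortest_walk[OF this] that show ?thesis by blast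
qed

lemma gdist_triangle:
  assumes conn: "walk_connected V E" and "u \<in> V" "w \<in> V" "v \<in> V"
  shows "gdist V E u v \<le> gdist V E u w + gdist V E w v"
proof -
  obtain xs where xs: "walk_from_to V E u w xs" "length xs = Suc (gdist V E u w)"
    using connected_shortest_walk[OF conn] assms by blast
  obtain ys where ys: "walk_from_to V E w v ys" "length ys = Suc (gdist V E w v)"
    using connected_shortest_walk[OF conn] assms by blast
  show ?thesis
    using gdist_less_length[OF walk_from_to_append(1)[OF xs(1) ys(1)]]
      walk_from_to_append(2)[OF xs(1) ys(1)] xs(2) ys(2) by simp
qed

lemma interval_iff_gdist:
  assumes conn: "walk_connected V E" and u: "u \<in> V" and v: "v \<in> V"
  shows "w \<in> interval V E u v \<longleftrightarrow> w \<in> V \<and> gdist V E u w + gdist V E w v = gdist V E u v"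
proof
  assume "w \<in> interval V E u v"
  then obtain xs where xs: "walk_from_to V E u v xs" "length xs = Suc (gdist V E u v)" "w \<in> set xs"
    unfolding interval_def by blast
  obtain p where p: "p < length xs" "xs ! p = w" using xs(3) by (meson in_set_conv_nth)
  have "gdist V E u w < length (take (Suc p) xs)"
    using gdist_less_length[OF walk_from_to_split(1)[OF xs(1) p(1)]] p(2) by simp
  moreover have "gdist V E w v < length (drop p xs)"
    using gdist_less_length[OF walk_from_to_split(2)[OF xs(1) p(1)]] p(2) by simp
  moreover have w: "w \<in> V" using xs(1,3) unfolding is_walk_def by blast
  ultimately have "gdist V E u w + gdist V E w v \<le> gdist V E u v"
    using p(1) xs(2) by simp
  then show "w \<in> V \<and> gdist V E u w + gdist V E w v = gdist V E u v"
    using gdist_triangle[OF conn u w v] w by simp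
next
  assume w: "w \<in> V \<and> gdist V E u w + gdist V E w v = gdist V E u v"
  obtain xs where xs: "walk_from_to V E u w xs" "length xs = Suc (gdist V E u w)"
    using connected_shortest_walk[OF conn] u w by blast
  obtain ys where ys: "walk_from_to V E w v ys" "length ys = Suc (gdist V E w v)"
    using connected_shortest_walk[OF conn] v w by blast
  have "w \<in> set (xs @ tl ys)" using xs(1) last_in_set[of xs] unfolding is_walk_def by auto
  moreover have "length (xs @ tl ys) = Suc (gdist V E u v)"
    using walk_from_to_append(2)[OF xs(1) ys(1)] xs(2) ys(2) w by simp
  ultimately show "w \<in> interval V E u v"
    using walk_from_to_append(1)[OF xs(1) ys(1)] unfolding interval_def by blast
qed

definition maximally_distant :: "'a set \<Rightarrow> ('a \<Rightarrow> 'a \<Rightarrow> bool) \<Rightarrow> 'a \<Rightarrow> 'a \<Rightarrow> bool" where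
  "maximally_distant V E u v \<longleftrightarrow> (\<forall>x\<in>V. E v x \<longrightarrow> gdist V E u x \<le> gdist V E u v)"

lemma gdist_step_towards:
  assumes conn: "walk_connected V E" and "v \<in> V" "w \<in> V" "v \<noteq> w"
  obtains x where "x \<in> V" "E v x" "Suc (gdist V E x w) \<le> gdist V E v w"
proof -
  obtain xs where xs: "walk_from_to V E v w xs" "length xs = Suc (gdist V E v w)"
    using connected_shortest_walk[OF conn] assms by blast
  then obtain x ys where xys: "xs = v # x # ys"
    using \<open>v \<noteq> w\<close> by (cases xs rule: remdups_adj.cases) (auto simp: is_walk_def)
  then have "x \<in> V" "E v x" "walk_from_to V E x w (x # ys)"
    using xs(1) by (auto simp: is_walk_Cons)
  moreover have "Suc (gdist V E x w) \<le> gdist V E v w"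
    using gdist_less_length[OF \<open>walk_from_to V E x w (x # ys)\<close>] xs(2) xys by simp
  ultimately show ?thesis using that by blast
qed

lemma not_in_interval_if_maximally_distant:
  assumes conn: "walk_connected V E" and u: "u \<in> V" and v: "v \<in> V" and w: "w \<in> V"
    and md: "maximally_distant V E u v" and "w \<noteq> v"
  shows "v \<notin> interval V E u w"
proof
  assume "v \<in> interval V E u w"
  then have on_geodesic: "gdist V E u v + gdist V E v w = gdist V E u w"
    using interval_iff_gdist[OF conn u w] by blast
  obtain x where x: "x \<in> V" "E v x" "Suc (gdist V E x w) \<le> gdist V E v w"
    using gdist_step_towards[OF conn v w] \<open>w \<noteq> v\<close> by metis
  have "gdist V E u w \<le> gdist V E u x + gdist V E x w" using gdist_triangle[OF conn u x(1) w] .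
  also have "\<dots> \<le> gdist V E u v + gdist V E x w" using md x by (simp add: maximally_distant_def)
  finally show False using on_geodesic x(3) by linarith
qed

lemma strong_resolving_set_meets_mutually_maximally_distant:
  assumes S: "strong_resolving_set V E S" and conn: "walk_connected V E"
    and u: "u \<in> V" and v: "v \<in> V" and "u \<noteq> v"
    and md: "maximally_distant V E u v" "maximally_distant V E v u"
  shows "u \<in> S \<or> v \<in> S"
proof -
  obtain w where w: "w \<in> S" "strongly_resolves V E w u v"
    using S u v \<open>u \<noteq> v\<close> unfolding strong_resolving_set_def by blast
  have "w \<in> V" using S w(1) by (auto simp: strong_resolving_set_def)
  then have "w = u \<or> w = v"
    using w(2) not_in_interval_if_maximally_distant[OF conn u v _ md(1)]
      not_in_interval_if_maximally_distant[OF conn v u _ md(2)]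
    unfolding strongly_resolves_def by blast
  then show ?thesis using w(1) by blast
qed

definition pk_vertices :: "nat \<Rightarrow> nat \<Rightarrow> (nat \<times> nat) set" where
  "pk_vertices r t = {..<r} \<times> {..<t}"

definition pk_adj :: "nat \<Rightarrow> nat \<Rightarrow> nat \<times> nat \<Rightarrow> nat \<times> nat \<Rightarrow> bool" where
  "pk_adj r t x y \<longleftrightarrow> (fst y = Suc (fst x) \<or> fst x = Suc (fst y)) \<and> fst x < r \<and> fst y < r
     \<and> snd x \<noteq> snd y \<and> snd x < t \<and> snd y < t"

lemma direct_prod_path_complete_vertices:
  "direct_prod_vertices (path_vertices r) (complete_vertices t) = pk_vertices r t"
  by (simp add: direct_prod_vertices_def path_vertices_def complete_vertices_def pk_vertices_def
      atLeast0LessThan)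

lemma direct_prod_path_complete_adj:
  "direct_prod_adj (path_adj r) (complete_adj t) = pk_adj r t"
  by (auto simp: fun_eq_iff direct_prod_adj_def path_adj_def complete_adj_def pk_adj_def)

lemma pk_adj_sym: "pk_adj r t x y \<Longrightarrow> pk_adj r t y x"
  by (auto simp: pk_adj_def)

text \<open>Valid for \<open>r \<ge> 2\<close> and \<open>t \<ge> 3\<close>: every step changes the row by one and a third colour is
  always available, so rows at distance at least 2 are joined along any colours; two colours in
  one row need a detour through a neighbouring row, and one colour in neighbouring rows needs
  three steps by parity.\<close>
definition pk_dist :: "nat \<times> nat \<Rightarrow> nat \<times> nat \<Rightarrow> nat" where
  "pk_dist u v =
     (if fst u = fst v then (if snd u = snd v then 0 else 2)
      else if fst u = Suc (fst v) \<or> fst v = Suc (fst u) then (if snd u = snd v then 3 else 1)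
      else (fst u - fst v) + (fst v - fst u))"

lemma pk_dist_sym: "pk_dist u v = pk_dist v u"
  by (auto simp: pk_dist_def)

lemma walk_row_displacement:
  assumes "is_walk V (pk_adj r t) xs" and "k < length xs"
  shows "(fst (xs ! 0) - fst (xs ! k)) + (fst (xs ! k) - fst (xs ! 0)) \<le> k
    \<and> even (k + fst (xs ! 0) + fst (xs ! k))"
  using assms(2)
proof (induction k)
  case (Suc k)
  then have "pk_adj r t (xs ! k) (xs ! Suc k)" using assms(1) unfolding is_walk_def by simp
  then have "fst (xs ! Suc k) = Suc (fst (xs ! k)) \<or> fst (xs ! k) = Suc (fst (xs ! Suc k))"
    by (simp add: pk_adj_def)
  with Suc show ?case by auto
qed simp

lemma pk_dist_less_length:
  assumes w: "is_walk V (pk_adj r t) xs"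
  shows "pk_dist (hd xs) (last xs) < length xs"
proof -
  obtain n where n: "length xs = Suc n" using w by (cases xs) (auto simp: is_walk_def)
  have "xs \<noteq> []" using n by auto
  then have ends: "hd xs = xs ! 0" "last xs = xs ! n"
    using n by (simp_all add: hd_conv_nth last_conv_nth)
  consider "n = 0" | "n = 1" | "n \<ge> 2" by linarith
  then show ?thesis
  proof cases
    case 1
    then show ?thesis using ends n by (simp add: pk_dist_def)
  next
    case 2
    then have "pk_adj r t (hd xs) (last xs)" using w n ends unfolding is_walk_def by auto
    then show ?thesis using n 2 by (auto simp: pk_adj_def pk_dist_def)
  next
    case 3
    have "(fst (xs ! 0) - fst (xs ! n)) + (fst (xs ! n) - fst (xs ! 0)) \<le> n
      \<and> even (n + fst (xs ! 0) + fst (xs ! n))"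
      using walk_row_displacement[OF w, of n] n by simp
    then have "pk_dist (xs ! 0) (xs ! n) \<le> n" using 3 unfolding pk_dist_def by presburger
    then show ?thesis using ends n by simp
  qed
qed

lemma exists_third_colour: "3 \<le> (t::nat) \<Longrightarrow> \<exists>c<t. c \<noteq> a \<and> c \<noteq> b"
  by (rule exI[of _ "if 0 \<notin> {a, b} then 0 else if 1 \<notin> {a, b} then 1 else 2"]) auto

lemma pk_walk_upwards:
  assumes t: "t \<ge> 3"
  shows "1 \<le> n \<Longrightarrow> (2 \<le> n \<or> a \<noteq> b) \<Longrightarrow> i + n < r \<Longrightarrow> a < t \<Longrightarrow> b < t \<Longrightarrow>
    \<exists>xs. walk_from_to (pk_vertices r t) (pk_adj r t) (i, a) (i + n, b) xs \<and> length xs = Suc n"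
proof (induction n arbitrary: i a)
  case (Suc n)
  show ?case
  proof (cases "n = 0")
    case True
    then show ?thesis using Suc.prems
      by (intro exI[of _ "[(i, a), (i + 1, b)]"]) (auto simp: is_walk_Cons pk_vertices_def pk_adj_def)
  next
    case False
    obtain c where c: "c < t" "c \<noteq> a" "c \<noteq> b" using exists_third_colour[OF t] by blast
    obtain ys where ys: "walk_from_to (pk_vertices r t) (pk_adj r t) (Suc i, c) (Suc i + n, b) ys"
      "length ys = Suc n"
      using Suc.IH[where i="Suc i" and a=c] Suc.prems False c by auto
    have "pk_adj r t (i, a) (hd ys)" "(i, a) \<in> pk_vertices r t"
      using ys Suc.prems c by (auto simp: pk_adj_def pk_vertices_def)
    then show ?thesis using ys
      by (intro exI[of _ "(i, a) # ys"]) (auto simp: is_walk_Cons)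
  qed
qed simp

lemma pk_shortest_walk:
  assumes r: "r \<ge> 2" and t: "t \<ge> 3" and uv: "u \<in> pk_vertices r t" "v \<in> pk_vertices r t"
  shows "\<exists>xs. walk_from_to (pk_vertices r t) (pk_adj r t) u v xs \<and> length xs = Suc (pk_dist u v)"
proof -
  obtain i a j b where u: "u = (i, a)" and v: "v = (j, b)" by fastforce
  have ia: "i < r" "a < t" "j < r" "b < t" using uv u v by (auto simp: pk_vertices_def)
  consider "i = j \<and> a = b" | "i = j \<and> a \<noteq> b" | "(j = Suc i \<or> i = Suc j) \<and> a = b"
    | "i < j \<and> (j \<noteq> Suc i \<or> a \<noteq> b)" | "j < i \<and> (i \<noteq> Suc j \<or> a \<noteq> b)" by linarith
  then show ?thesis
  proof cases
    case 1
    then show ?thesis using uv u v by (intro exI[of _ "[u]"]) (auto simp: is_walk_def pk_dist_def)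
  next
    case 2
    obtain c where c: "c < t" "c \<noteq> a" "c \<noteq> b" using exists_third_colour[OF t] by blast
    define i' where "i' = (if Suc i < r then Suc i else i - 1)"
    have i': "i' < r" "i' = Suc i \<or> i = Suc i'" using ia r unfolding i'_def by auto
    have "is_walk (pk_vertices r t) (pk_adj r t) [(i, a), (i', c), (i, b)]"
      using i' ia c 2 by (auto simp: is_walk_Cons pk_vertices_def pk_adj_def)
    then show ?thesis using 2 u v by (intro exI[of _ "[(i, a), (i', c), (i, b)]"]) (auto simp: pk_dist_def)
  next
    case 3
    obtain c where c: "c < t" "c \<noteq> a" using exists_third_colour[OF t] by blast
    obtain d where d: "d < t" "d \<noteq> a" "d \<noteq> c" using exists_third_colour[OF t] by blast
    have "is_walk (pk_vertices r t) (pk_adj r t) [(i, a), (j, c), (i, d), (j, a)]"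
      using ia c d 3 by (auto simp: is_walk_Cons pk_vertices_def pk_adj_def)
    then show ?thesis using 3 u v
      by (intro exI[of _ "[(i, a), (j, c), (i, d), (j, a)]"]) (auto simp: pk_dist_def)
  next
    case 4
    then have "1 \<le> j - i" "2 \<le> j - i \<or> a \<noteq> b" "i + (j - i) < r" "pk_dist u v = j - i"
      using ia u v by (auto simp: pk_dist_def)
    then show ?thesis using pk_walk_upwards[OF t, of "j - i" a b i r] ia u v 4 by auto
  next
    case 5
    then have "1 \<le> i - j" "2 \<le> i - j \<or> b \<noteq> a" "j + (i - j) < r" "pk_dist v u = i - j"
      using ia u v by (auto simp: pk_dist_def)
    then obtain xs where xs: "walk_from_to (pk_vertices r t) (pk_adj r t) v u xs"
      "length xs = Suc (pk_dist v u)"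
      using pk_walk_upwards[OF t, of "i - j" b a j r] ia u v 5 by auto
    have "is_walk (pk_vertices r t) (pk_adj r t) (rev xs)"
      using is_walk_rev[of _ "pk_adj r t" xs] pk_adj_sym xs(1) by blast
    moreover have "xs \<noteq> []" using xs by (auto simp: is_walk_def)
    ultimately show ?thesis using xs pk_dist_sym[of u v]
      by (intro exI[of _ "rev xs"]) (auto simp: hd_rev last_rev)
  qed
qed

lemma pk_walk_connected: "r \<ge> 2 \<Longrightarrow> t \<ge> 3 \<Longrightarrow> walk_connected (pk_vertices r t) (pk_adj r t)"
  unfolding walk_connected_def using pk_shortest_walk by blast

lemma gdist_pk_eq_pk_dist:
  assumes "r \<ge> 2" "t \<ge> 3" "u \<in> pk_vertices r t" "v \<in> pk_vertices r t"
  shows "gdist (pk_vertices r t) (pk_adj r t) u v = pk_dist u v"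
proof -
  obtain xs where "walk_from_to (pk_vertices r t) (pk_adj r t) u v xs" "length xs = Suc (pk_dist u v)"
    using pk_shortest_walk[OF assms] by blast
  then show ?thesis by (rule gdist_eqI) (use pk_dist_less_length in blast)
qed

lemma strongly_resolves_pk_iff:
  assumes "r \<ge> 2" "t \<ge> 3" and "u \<in> pk_vertices r t" "v \<in> pk_vertices r t" "w \<in> pk_vertices r t"
  shows "strongly_resolves (pk_vertices r t) (pk_adj r t) w u v \<longleftrightarrow>
    pk_dist u v + pk_dist v w = pk_dist u w \<or> pk_dist v u + pk_dist u w = pk_dist v w"
  using assms
  by (simp add: strongly_resolves_def interval_iff_gdist pk_walk_connected gdist_pk_eq_pk_dist)

lemma card_consecutive_cover:
  assumes "\<forall>i. Suc i < r \<longrightarrow> i \<in> A \<or> Suc i \<in> A"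
  shows "(r + of_bool (0 \<in> A)) div 2 \<le> card (A \<inter> {..<r})"
  using assms
proof (induction r rule: less_induct)
  case (less r)
  show ?case
  proof (cases "r < 2")
    case True
    then consider "r = 0" | "r = 1" by linarith
    then show ?thesis
    proof cases
      case 2
      then have "A \<inter> {..<r} = (if 0 \<in> A then {0} else {})" by auto
      then show ?thesis using 2 by simp
    qed simp
  next
    case False
    then obtain s where s: "r = Suc (Suc s)" by (metis add_2_eq_Suc le_add_diff_inverse not_less)
    have ih: "(s + of_bool (0 \<in> A)) div 2 \<le> card (A \<inter> {..<s})" using less s by simp
    have "s \<in> A \<or> Suc s \<in> A" using less.prems s by simp
    then have "1 \<le> card (A \<inter> {s, Suc s})" by (auto simp: card_gt_0_iff Suc_le_eq)
    moreover have "A \<inter> {..<r} = (A \<inter> {..<s}) \<union> (A \<inter> {s, Suc s})" using s by auto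
    moreover have "card ((A \<inter> {..<s}) \<union> (A \<inter> {s, Suc s})) = card (A \<inter> {..<s}) + card (A \<inter> {s, Suc s})"
      by (rule card_Un_disjoint) auto
    ultimately show ?thesis using ih s by simp
  qed
qed

lemma card_consecutive_cover_ends:
  assumes cover: "\<forall>i. Suc i < r \<longrightarrow> i \<in> A \<or> Suc i \<in> A" and sub: "A \<subseteq> {..<r}"
    and ends: "even r \<or> 0 \<in> A \<or> r - 1 \<in> A"
  shows "(r + 1) div 2 \<le> card A"
proof -
  have first: "(r + 1) div 2 \<le> card B"
    if cover: "\<forall>i. Suc i < r \<longrightarrow> i \<in> B \<or> Suc i \<in> B" and sub: "B \<subseteq> {..<r}"
      and ends: "even r \<or> 0 \<in> B" for B
  proof -
    have "(r + 1) div 2 \<le> (r + of_bool (0 \<in> B)) div 2" using ends by auto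
    also have "\<dots> \<le> card (B \<inter> {..<r})" using card_consecutive_cover[OF cover] .
    finally show ?thesis using sub by (simp add: Int_absorb2)
  qed
  show ?thesis
  proof (cases "r - 1 \<in> A \<and> odd r")
    case True
    define reflect where "reflect i = r - 1 - i" for i
    have inj: "inj_on reflect A"
    proof (rule inj_onI)
      fix x y assume "x \<in> A" "y \<in> A" "reflect x = reflect y"
      moreover from this(1,2) have "x < r" "y < r" using sub by auto
      ultimately show "x = y" unfolding reflect_def by arith
    qed
    have "(r + 1) div 2 \<le> card (reflect ` A)"
    proof (rule first)
      show "\<forall>i. Suc i < r \<longrightarrow> i \<in> reflect ` A \<or> Suc i \<in> reflect ` A"
      proof (intro allI impI)
        fix i assume i: "Suc i < r"
        have "reflect (r - 2 - i) = Suc i" "reflect (Suc (r - 2 - i)) = i"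
          using i by (auto simp: reflect_def)
        moreover have "r - 2 - i \<in> A \<or> Suc (r - 2 - i) \<in> A" using cover i by simp
        ultimately show "i \<in> reflect ` A \<or> Suc i \<in> reflect ` A" by (metis image_eqI)
      qed
      show "reflect ` A \<subseteq> {..<r}" using sub by (auto simp: reflect_def)
      show "even r \<or> 0 \<in> reflect ` A" using True by (force simp: reflect_def)
    qed
    then show ?thesis using card_image[OF inj] by simp
  next
    case False
    then show ?thesis using first[OF cover sub] ends by blast
  qed
qed

lemma maximally_distant_pkI:
  assumes "r \<ge> 2" "t \<ge> 3" "u \<in> pk_vertices r t" "v \<in> pk_vertices r t"
    and "\<And>x. pk_adj r t v x \<Longrightarrow> pk_dist u x \<le> pk_dist u v"
  shows "maximally_distant (pk_vertices r t) (pk_adj r t) u v"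
  using assms gdist_pk_eq_pk_dist[OF assms(1-3)] gdist_pk_eq_pk_dist[OF assms(1-4)]
  by (simp add: maximally_distant_def)

lemma pk_adjacent_rows_maximally_distant:
  assumes "r \<ge> 2" "t \<ge> 3" "Suc i < r" "a < t"
  shows "maximally_distant (pk_vertices r t) (pk_adj r t) (i, a) (Suc i, a)"
    and "maximally_distant (pk_vertices r t) (pk_adj r t) (Suc i, a) (i, a)"
  by (rule maximally_distant_pkI; use assms in \<open>auto simp: pk_vertices_def pk_adj_def pk_dist_def\<close>)+

lemma pk_end_rows_maximally_distant:
  assumes "r \<ge> 3" "t \<ge> 3" "a < t"
  shows "maximally_distant (pk_vertices r t) (pk_adj r t) (0, a) (r - 1, a)"
    and "maximally_distant (pk_vertices r t) (pk_adj r t) (r - 1, a) (0, a)"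
  by (rule maximally_distant_pkI; use assms in \<open>auto simp: pk_vertices_def pk_adj_def pk_dist_def\<close>)+

lemma pk_strong_resolving_set_card_ge:
  assumes r: "r \<ge> 2" and t: "t \<ge> 3" and S: "strong_resolving_set (pk_vertices r t) (pk_adj r t) S"
  shows "t * ((r + 1) div 2) \<le> card S"
proof -
  note meets = strong_resolving_set_meets_mutually_maximally_distant[OF S pk_walk_connected[OF r t]]
  have sub: "S \<subseteq> pk_vertices r t" using S by (simp add: strong_resolving_set_def)
  define A where "A a = {i. (i, a) \<in> S}" for a
  have A_sub: "A a \<subseteq> {..<r}" for a using sub by (auto simp: A_def pk_vertices_def)
  have "(r + 1) div 2 \<le> card (A a)" if a: "a < t" for a
  proof (rule card_consecutive_cover_ends)
    show "\<forall>i. Suc i < r \<longrightarrow> i \<in> A a \<or> Suc i \<in> A a"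
      using meets pk_adjacent_rows_maximally_distant[OF r t _ a] a by (auto simp: A_def pk_vertices_def)
    show "A a \<subseteq> {..<r}" by (rule A_sub)
    have "(0, a) \<in> S \<or> (r - 1, a) \<in> S" if "odd r"
    proof -
      have "r \<ge> 3" using r that by presburger
      then show ?thesis
        using meets pk_end_rows_maximally_distant[OF _ t a] a by (auto simp: pk_vertices_def)
    qed
    then show "even r \<or> 0 \<in> A a \<or> r - 1 \<in> A a" by (auto simp: A_def)
  qed
  then have "t * ((r + 1) div 2) \<le> (\<Sum>a<t. card (A a))"
    using sum_mono[of "{..<t}" "\<lambda>_. (r + 1) div 2"] by simp
  also have "\<dots> = card (SIGMA a:{..<t}. A a)"
    by (rule card_SigmaI[symmetric]) (auto intro: finite_subset[OF A_sub])
  also have "(SIGMA a:{..<t}. A a) = prod.swap ` S" using sub by (force simp: A_def pk_vertices_def)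
  also have "card (prod.swap ` S) = card S" by (simp add: card_image)
  finally show ?thesis .
qed

definition even_rows :: "nat \<Rightarrow> nat \<Rightarrow> (nat \<times> nat) set" where
  "even_rows r t = {x \<in> pk_vertices r t. even (fst x)}"

lemma card_even_rows: "card (even_rows r t) = t * ((r + 1) div 2)"
proof -
  have "{i. i < r \<and> even i} = (\<lambda>k. 2 * k) ` {..<(r + 1) div 2}"
    by (auto simp: image_iff elim!: evenE)
  then have "card {i. i < r \<and> even i} = (r + 1) div 2"
    by (simp add: card_image inj_on_def)
  moreover have "even_rows r t = {i. i < r \<and> even i} \<times> {..<t}"
    by (auto simp: even_rows_def pk_vertices_def)
  ultimately show ?thesis by (simp add: card_cartesian_product)
qed

lemma odd_rows_resolved_by_even_rows:
  assumes t: "t \<ge> 3" and uv: "(i, a) \<in> pk_vertices r t" "(j, b) \<in> pk_vertices r t"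
    and odd: "odd i" "odd j" and ij: "i \<le> j" and ne: "(i, a) \<noteq> (j, b)"
  shows "\<exists>w\<in>even_rows r t. pk_dist (i, a) (j, b) + pk_dist (j, b) w = pk_dist (i, a) w
    \<or> pk_dist (j, b) (i, a) + pk_dist (i, a) w = pk_dist (j, b) w"
proof -
  have lt: "i < r" "j < r" "a < t" "b < t" using uv by (auto simp: pk_vertices_def)
  obtain i' where i': "i = Suc i'" "even i'" using odd(1) by (cases i) auto
  consider "i = j" | "i < j" "Suc j < r" | "i < j" "\<not> Suc j < r" using ij by linarith
  then show ?thesis
  proof cases
    case 1
    have "(i', a) \<in> even_rows r t" using lt i' by (auto simp: even_rows_def pk_vertices_def)
    moreover have "pk_dist (i, a) (j, b) + pk_dist (j, b) (i', a) = pk_dist (i, a) (i', a)"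
      using 1 ne i' by (simp add: pk_dist_def)
    ultimately show ?thesis by blast
  next
    case 2
    obtain c where c: "c < t" "c \<noteq> b" using exists_third_colour[OF t] by blast
    have "j \<noteq> Suc i" using 2 odd by auto
    then have "pk_dist (i, a) (j, b) + pk_dist (j, b) (Suc j, c) = pk_dist (i, a) (Suc j, c)"
      using 2 c by (auto simp: pk_dist_def)
    moreover have "(Suc j, c) \<in> even_rows r t" using 2 c odd by (auto simp: even_rows_def pk_vertices_def)
    ultimately show ?thesis by blast
  next
    case 3
    obtain c where c: "c < t" "c \<noteq> a" using exists_third_colour[OF t] by blast
    have "j \<noteq> Suc i" using 3 odd by auto
    then have "pk_dist (j, b) (i, a) + pk_dist (i, a) (i', c) = pk_dist (j, b) (i', c)"
      using 3 c i' by (auto simp: pk_dist_def)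
    moreover have "(i', c) \<in> even_rows r t" using lt c i' by (auto simp: even_rows_def pk_vertices_def)
    ultimately show ?thesis by blast
  qed
qed

lemma even_rows_strong_resolving_set:
  assumes r: "r \<ge> 2" and t: "t \<ge> 3"
  shows "strong_resolving_set (pk_vertices r t) (pk_adj r t) (even_rows r t)"
  unfolding strong_resolving_set_def
proof (intro conjI ballI impI)
  show "even_rows r t \<subseteq> pk_vertices r t" by (auto simp: even_rows_def)
  fix u v assume u: "u \<in> pk_vertices r t" and v: "v \<in> pk_vertices r t" and ne: "u \<noteq> v"
  have resolves: "strongly_resolves (pk_vertices r t) (pk_adj r t) w u v \<longleftrightarrow>
    pk_dist u v + pk_dist v w = pk_dist u w \<or> pk_dist v u + pk_dist u w = pk_dist v w"
    if "w \<in> even_rows r t" for w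
    using strongly_resolves_pk_iff[OF r t u v, of w] that unfolding even_rows_def by blast
  have "\<exists>w\<in>even_rows r t. pk_dist u v + pk_dist v w = pk_dist u w \<or> pk_dist v u + pk_dist u w = pk_dist v w"
  proof (cases "u \<in> even_rows r t \<or> v \<in> even_rows r t")
    case True
    have "pk_dist u v + pk_dist v v = pk_dist u v" "pk_dist v u + pk_dist u u = pk_dist v u"
      by (simp_all add: pk_dist_def)
    then show ?thesis using True by blast
  next
    case False
    obtain i a j b where uv: "u = (i, a)" "v = (j, b)" by fastforce
    have odd: "odd i" "odd j" using False u v uv by (auto simp: even_rows_def)
    show ?thesis
    proof (cases "i \<le> j")
      case True
      then show ?thesis
        using odd_rows_resolved_by_even_rows[OF t _ _ odd] u v ne unfolding uv by blast
    next
      case False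
      then show ?thesis
        using odd_rows_resolved_by_even_rows[OF t _ _ odd(2,1)] u v ne unfolding uv by fastforce
    qed
  qed
  then show "\<exists>w\<in>even_rows r t. strongly_resolves (pk_vertices r t) (pk_adj r t) w u v"
    using resolves by blast
qed

lemma nat_ceiling_half: "nat \<lceil>real r / 2\<rceil> = (r + 1) div 2"
proof -
  have "\<lceil>real r / 2\<rceil> = int ((r + 1) div 2)"
  proof (rule ceiling_unique)
    obtain m where "r = 2 * m \<or> r = 2 * m + 1" by (metis oddE evenE)
    then show "real_of_int (int ((r + 1) div 2)) - 1 < real r / 2"
      and "real r / 2 \<le> real_of_int (int ((r + 1) div 2))" by auto
  qed
  then show ?thesis by simp
qed

theorem theorem37:
  fixes r t :: nat
  assumes "r \<ge> 2" and "t \<ge> 3"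
  shows "strong_metric_dim
           (direct_prod_vertices (path_vertices r) (complete_vertices t))
           (direct_prod_adj (path_adj r) (complete_adj t))
         = t * nat \<lceil>real r / 2\<rceil>"
  unfolding direct_prod_path_complete_vertices direct_prod_path_complete_adj nat_ceiling_half
    strong_metric_dim_def
proof (rule Least_equality)
  have "finite (even_rows r t)" by (simp add: even_rows_def pk_vertices_def)
  then show "\<exists>S. strong_resolving_set (pk_vertices r t) (pk_adj r t) S \<and> finite S
      \<and> card S = t * ((r + 1) div 2)"
    using even_rows_strong_resolving_set[OF assms] card_even_rows by blast
next
  fix k assume "\<exists>S. strong_resolving_set (pk_vertices r t) (pk_adj r t) S \<and> finite S \<and> card S = k"
  then show "t * ((r + 1) div 2) \<le> k" using pk_strong_resolving_set_card_ge[OF assms] by blast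
qed

end
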